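(* For every sectorial solution of system (CSF) there exists $c_0>0$ such that $\min_i|\mathbf v_i(t)|\ge c_0$ for all $t\ge0$.
   Context: Fix integers $N\ge1$, $n\ge1$, masses $m_1,\dots,m_N>0$ with $M=\sum_i m_i$, parameters $\sigma>0$, $p>0$, $\kappa\ge0$, and a communication kernel $\phi:[0,\infty)\to(0,\infty)$ that is smooth, positive and non-increasing. Write $\phi_{ij}=\phi(|\mathbf x_i-\mathbf x_j|)$, with $|\cdot|$ the Euclidean norm on $\mathbb R^n$. System (CSF) is, for $i=1,\dots,N$, $$\dot{\mathbf x}_i=\mathbf v_i,\qquad \dot{\mathbf v}_i=\sum_{j=1}^N m_j\phi_{ij}(\mathbf v_j-\mathbf v_i)+\sigma(\theta_i-|\mathbf v_i|^p)\mathbf v_i,\qquad \dot\theta_i=\kappa\sum_{j=1}^N m_j\phi_{ij}(\theta_j-\theta_i),$$ with $\mathbf x_i,\mathbf v_i\in\mathbb R^n$ and initial values $\theta_i(0)>0$; solutions are considered for $t\ge0$. A solution is called sectorial if there exists a unit vector $\mathbf e\in\mathbb R^n$ with $\mathbf e\cdot\mathbf v_i(0)>0$ for all $i=1,\dots,N$. *)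

theory Defs
  imports "HOL-Analysis.Analysis"
begin

text \<open>Communication kernel: smooth (C-infinity on [0,inf), one-sided at 0),
  positive and non-increasing on [0,inf).\<close>
definition comm_kernel :: "(real \<Rightarrow> real) \<Rightarrow> bool" where
  "comm_kernel \<phi> \<longleftrightarrow>
     (\<exists>D :: nat \<Rightarrow> real \<Rightarrow> real. D 0 = \<phi> \<and>
        (\<forall>k. \<forall>s\<ge>0. (D k has_real_derivative D (Suc k) s) (at s within {0..}))) \<and>
     (\<forall>s\<ge>0. \<phi> s > 0) \<and>
     (\<forall>s t. 0 \<le> s \<longrightarrow> s \<le> t \<longrightarrow> \<phi> t \<le> \<phi> s)"

definition CSF_solution ::
  "nat \<Rightarrow> (nat \<Rightarrow> real) \<Rightarrow> real \<Rightarrow> real \<Rightarrow> real \<Rightarrow> (real \<Rightarrow> real)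
   \<Rightarrow> (nat \<Rightarrow> real \<Rightarrow> 'a::euclidean_space) \<Rightarrow> (nat \<Rightarrow> real \<Rightarrow> 'a)
   \<Rightarrow> (nat \<Rightarrow> real \<Rightarrow> real) \<Rightarrow> bool" where
  "CSF_solution N m \<sigma> p \<kappa> \<phi> x v \<theta> \<longleftrightarrow>
     (\<forall>i<N. \<forall>t\<ge>0.
        (x i has_vector_derivative v i t) (at t within {0..}) \<and>
        (v i has_vector_derivative
            ((\<Sum>j<N. (m j * \<phi> (norm (x i t - x j t))) *\<^sub>R (v j t - v i t))
             + (\<sigma> * (\<theta> i t - norm (v i t) powr p)) *\<^sub>R v i t)) (at t within {0..}) \<and>
        (\<theta> i has_real_derivative
            (\<kappa> * (\<Sum>j<N. m j * \<phi> (norm (x i t - x j t)) * (\<theta> j t - \<theta> i t)))) (at t within {0..}))"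

definition sectorial :: "nat \<Rightarrow> (nat \<Rightarrow> real \<Rightarrow> 'a::euclidean_space) \<Rightarrow> bool" where
  "sectorial N v \<longleftrightarrow> (\<exists>e. norm e = 1 \<and> (\<forall>i<N. e \<bullet> v i 0 > 0))"

end

theory Submission
  imports Defs
begin

text \<open>Fix a unit vector \<open>e\<close> of the sector and let \<open>\<theta>\<^sub>0 = min\<^sub>i \<theta>\<^sub>i(0)\<close>. Three families of
  quantities stay positive for all time: \<open>e \<bullet> v\<^sub>i - c\<close>; \<open>e \<bullet> v\<^sub>i - a(t) |v\<^sub>i|\<close>, i.e. the velocities
  stay in a cone around \<open>e\<close> whose aperture \<open>a(t)\<close> shrinks from \<open>a\<^sub>0\<close> to \<open>a\<^sub>0/2\<close>; and
  \<open>\<theta>\<^sub>i - \<tau>(t)\<close> for a temperature floor \<open>\<tau>(t)\<close> decreasing from \<open>\<theta>\<^sub>0/2\<close> to \<open>\<theta>\<^sub>0/4\<close>. At the first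
  time one of them vanishes, the others are still nonnegative and its derivative is positive:
  alignment with the other agents points inwards, the decreasing profiles give slack, and on the
  projection boundary the cone forces \<open>|v\<^sub>i| \<le> 2c/a\<^sub>0\<close>, which for small \<open>c\<close> makes the
  self-propulsion \<open>\<sigma>(\<theta>\<^sub>i - |v\<^sub>i|\<^sup>p)\<close> accelerate. Hence \<open>|v\<^sub>i| \<ge> e \<bullet> v\<^sub>i \<ge> c\<close>.\<close>

lemma has_real_derivative_inner_const:
  fixes f :: "real \<Rightarrow> 'a::real_inner"
  assumes "(f has_vector_derivative f') (at t within S)"
  shows "((\<lambda>s. e \<bullet> f s) has_real_derivative e \<bullet> f') (at t within S)"
proof -
  have "((\<lambda>s. e \<bullet> f s) has_derivative (\<lambda>h. e \<bullet> (h *\<^sub>R f'))) (at t within S)"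
    using assms unfolding has_vector_derivative_def by (rule has_derivative_inner_right)
  moreover have "(\<lambda>h. e \<bullet> (h *\<^sub>R f')) = (*) (e \<bullet> f')" by (auto simp: fun_eq_iff)
  ultimately show ?thesis unfolding has_field_derivative_def by simp
qed

lemma has_real_derivative_norm:
  fixes f :: "real \<Rightarrow> 'a::real_inner"
  assumes "(f has_vector_derivative f') (at t within S)" "f t \<noteq> 0"
  shows "((\<lambda>s. norm (f s)) has_real_derivative f t \<bullet> f' / norm (f t)) (at t within S)"
proof -
  have "(norm has_derivative (\<lambda>y. f t \<bullet> y / norm (f t))) (at (f t))"
    using has_derivative_norm[OF assms(2)]
    by (simp add: sgn_div_norm divide_inverse_commute inner_commute)
  from has_derivative_compose[OF assms(1)[unfolded has_vector_derivative_def] this]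
  have "((\<lambda>s. norm (f s)) has_derivative (\<lambda>h. h * (f t \<bullet> f') / norm (f t))) (at t within S)"
    by (simp add: o_def)
  moreover have "(\<lambda>h. h * (f t \<bullet> f') / norm (f t)) = (*) (f t \<bullet> f' / norm (f t))"
    by (auto simp: fun_eq_iff)
  ultimately show ?thesis unfolding has_field_derivative_def by simp
qed

lemma neg_before_zero_of_pos_deriv:
  fixes f :: "real \<Rightarrow> real"
  assumes "(f has_real_derivative D) (at T within {0..})" "D > 0" "T > 0" "f T = 0"
  obtains t where "0 \<le> t" "t < T" "f t < 0"
proof -
  have "at T within {0..} = at T" using \<open>T > 0\<close> by (intro at_within_interior) auto
  with assms(1) have "DERIV f T :> D" by simp
  from DERIV_pos_inc_left[OF this \<open>D > 0\<close>] obtain d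
    where d: "d > 0" "\<And>h. h > 0 \<Longrightarrow> h < d \<Longrightarrow> f (T - h) < f T" by blast
  let ?h = "min d T / 2"
  have "f (T - ?h) < 0" using d assms(3,4) by simp
  then show ?thesis using d(1) assms(3) by (intro that[of "T - ?h"]) auto
qed

lemma nonneg_at_end_of_positive_interval:
  fixes f :: "real \<Rightarrow> real"
  assumes "continuous_on {0..} f" "T > 0" "\<And>t. 0 \<le> t \<Longrightarrow> t < T \<Longrightarrow> f t > 0"
  shows "f T \<ge> 0"
proof -
  have "continuous_on (closure {0..<T}) f"
    using assms(1,2) by (auto intro: continuous_on_subset)
  moreover have "T \<in> closure {0..<T}" using assms(2) by simp
  ultimately show ?thesis
    by (rule continuous_ge_on_closure) (use assms(3) in \<open>force\<close>)
qed

lemma finite_family_stays_positive: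
  fixes F :: "'i \<Rightarrow> real \<Rightarrow> real"
  assumes "finite I"
    and cont: "\<And>i. i \<in> I \<Longrightarrow> continuous_on {0..} (F i)"
    and init: "\<And>i. i \<in> I \<Longrightarrow> F i 0 > 0"
    and push: "\<And>t i. t > 0 \<Longrightarrow> i \<in> I \<Longrightarrow> (\<forall>j\<in>I. F j t \<ge> 0) \<Longrightarrow> F i t = 0 \<Longrightarrow>
        \<exists>D>0. (F i has_real_derivative D) (at t within {0..})"
    and "i \<in> I" "t \<ge> 0"
  shows "F i t > 0"
proof (rule ccontr)
  assume "\<not> F i t > 0"
  define S where "S = (\<Union>j\<in>I. {0..} \<inter> F j -` {..0})"
  have "closed S"
    unfolding S_def using cont
    by (intro closed_UN[OF \<open>finite I\<close>]) (auto intro: continuous_closed_preimage)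
  moreover have "t \<in> S" using \<open>\<not> F i t > 0\<close> \<open>i \<in> I\<close> \<open>t \<ge> 0\<close> by (auto simp: S_def not_less)
  then have "S \<noteq> {}" by blast
  moreover have "bdd_below S" unfolding S_def by (rule bdd_belowI[of _ 0]) auto
  ultimately have "Inf S \<in> S" by (rule closed_contains_Inf[rotated -1])
  define T where "T = Inf S"
  from \<open>Inf S \<in> S\<close> obtain k where k: "k \<in> I" "T \<ge> 0" "F k T \<le> 0" by (auto simp: S_def T_def)
  have before: "F j s > 0" if "j \<in> I" "0 \<le> s" "s < T" for j s
  proof (rule ccontr)
    assume "\<not> F j s > 0"
    then have "s \<in> S" using that by (force simp: S_def not_less)
    then show False using cInf_lower[OF _ \<open>bdd_below S\<close>] \<open>s < T\<close> by (fastforce simp: T_def)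
  qed
  have "T > 0" using k init[of k] by (cases "T = 0") auto
  have nonneg: "\<forall>j\<in>I. F j T \<ge> 0"
    using nonneg_at_end_of_positive_interval[OF cont \<open>T > 0\<close>] before by blast
  then have "F k T = 0" using k by force
  with push[OF \<open>T > 0\<close> k(1) nonneg] obtain D
    where "D > 0" "(F k has_real_derivative D) (at T within {0..})" by blast
  then obtain s where "0 \<le> s" "s < T" "F k s < 0"
    using neg_before_zero_of_pos_deriv \<open>T > 0\<close> \<open>F k T = 0\<close> by metis
  with before[OF k(1)] show False by fastforce
qed

lemma inner_sum_weighted_differences:
  fixes u :: "'a::real_inner"
  shows "u \<bullet> (\<Sum>j\<in>J. c j *\<^sub>R (w j - w0)) = (\<Sum>j\<in>J. c j * (u \<bullet> w j - u \<bullet> w0))"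
  by (simp add: inner_sum_right inner_diff_right)

lemma alignment_inner_nonneg:
  fixes e :: "'a::real_inner"
  assumes "\<forall>j\<in>J. c j \<ge> 0 \<and> e \<bullet> w j \<ge> e \<bullet> w0"
  shows "e \<bullet> (\<Sum>j\<in>J. c j *\<^sub>R (w j - w0)) \<ge> 0"
  unfolding inner_sum_weighted_differences using assms by (intro sum_nonneg) auto

lemma alignment_cone_nonneg:
  fixes e w0 :: "'a::real_inner"
  assumes "w0 \<noteq> 0" "a \<ge> 0" "e \<bullet> w0 = a * norm w0"
    and "\<forall>j\<in>J. c j \<ge> 0 \<and> e \<bullet> w j \<ge> a * norm (w j)"
  shows "e \<bullet> (\<Sum>j\<in>J. c j *\<^sub>R (w j - w0)) - a * (w0 \<bullet> (\<Sum>j\<in>J. c j *\<^sub>R (w j - w0))) / norm w0 \<ge> 0"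
proof -
  have nw0: "norm w0 > 0" using assms(1) by simp
  have "e \<bullet> (\<Sum>j\<in>J. c j *\<^sub>R (w j - w0)) - a * (w0 \<bullet> (\<Sum>j\<in>J. c j *\<^sub>R (w j - w0))) / norm w0
      = (\<Sum>j\<in>J. c j * ((e \<bullet> w j - e \<bullet> w0) - a * (w0 \<bullet> w j - w0 \<bullet> w0) / norm w0))"
    unfolding inner_sum_weighted_differences
    by (simp add: sum_subtractf sum_distrib_left sum.distrib algebra_simps flip: sum_divide_distrib)
  also have "\<dots> \<ge> 0"
  proof (intro sum_nonneg)
    fix j assume j: "j \<in> J"
    have "a * (w0 \<bullet> w j) / norm w0 \<le> a * norm (w j)"
      using mult_left_mono[OF norm_cauchy_schwarz[of w0 "w j"] assms(2)] nw0
      by (simp add: divide_le_eq mult.commute mult.left_commute)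
    moreover have "a * (w0 \<bullet> w0) / norm w0 = a * norm w0"
      using nw0 by (simp add: power2_eq_square flip: power2_norm_eq_inner)
    ultimately have "(e \<bullet> w j - e \<bullet> w0) - a * (w0 \<bullet> w j - w0 \<bullet> w0) / norm w0 \<ge> 0"
      using assms(3,4) j by (simp add: right_diff_distrib diff_divide_distrib) (meson order_trans)
    then show "c j * ((e \<bullet> w j - e \<bullet> w0) - a * (w0 \<bullet> w j - w0 \<bullet> w0) / norm w0) \<ge> 0"
      using assms(4) j by simp
  qed
  finally show ?thesis .
qed

definition half_decay :: "real \<Rightarrow> real \<Rightarrow> real" where
  "half_decay k t = k * (1 + exp (- t)) / 2"

lemma half_decay_0 [simp]: "half_decay k 0 = k"
  by (simp add: half_decay_def)

lemma half_decay_gt: "k > 0 \<Longrightarrow> k / 2 < half_decay k t"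
  by (simp add: half_decay_def field_simps)

lemma has_real_derivative_half_decay:
  "(half_decay k has_real_derivative - (k * exp (- t)) / 2) (at t within S)"
  unfolding half_decay_def by (auto intro!: derivative_eq_intros)

lemma continuous_on_half_decay: "continuous_on S (half_decay k)"
  unfolding half_decay_def by (intro continuous_intros) auto

datatype barrier_kind = Projection | Cone | Temperature

locale sectorial_CSF =
  fixes N :: nat and m :: "nat \<Rightarrow> real" and \<sigma> p \<kappa> :: real and \<phi> :: "real \<Rightarrow> real"
    and x v :: "nat \<Rightarrow> real \<Rightarrow> 'a::euclidean_space" and \<theta> :: "nat \<Rightarrow> real \<Rightarrow> real"
    and e :: 'a
  assumes agents: "N \<ge> 1"
    and mass_pos: "\<And>j. j < N \<Longrightarrow> m j > 0"
    and sigma_pos: "\<sigma> > 0" and p_pos: "p > 0" and kappa_nonneg: "\<kappa> \<ge> 0"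
    and kernel_pos: "\<And>s. s \<ge> 0 \<Longrightarrow> \<phi> s > 0"
    and temperature_init_pos: "\<And>i. i < N \<Longrightarrow> \<theta> i 0 > 0"
    and solution: "CSF_solution N m \<sigma> p \<kappa> \<phi> x v \<theta>"
    and e_unit: "norm e = 1"
    and e_init: "\<And>i. i < N \<Longrightarrow> e \<bullet> v i 0 > 0"
begin

definition alignment :: "nat \<Rightarrow> real \<Rightarrow> 'a" where
  "alignment i t = (\<Sum>j<N. (m j * \<phi> (norm (x i t - x j t))) *\<^sub>R (v j t - v i t))"

definition propulsion :: "nat \<Rightarrow> real \<Rightarrow> real" where
  "propulsion i t = \<sigma> * (\<theta> i t - norm (v i t) powr p)"

lemma velocity_derivative:
  "i < N \<Longrightarrow> t \<ge> 0 \<Longrightarrow>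
    (v i has_vector_derivative alignment i t + propulsion i t *\<^sub>R v i t) (at t within {0..})"
  using solution unfolding CSF_solution_def alignment_def propulsion_def by blast

lemma temperature_derivative:
  "i < N \<Longrightarrow> t \<ge> 0 \<Longrightarrow> (\<theta> i has_real_derivative
    \<kappa> * (\<Sum>j<N. m j * \<phi> (norm (x i t - x j t)) * (\<theta> j t - \<theta> i t))) (at t within {0..})"
  using solution unfolding CSF_solution_def by blast

lemma weight_nonneg: "j < N \<Longrightarrow> m j * \<phi> (norm (x i t - x j t)) \<ge> 0"
  using mass_pos kernel_pos by (simp add: less_imp_le)

lemma continuous_on_velocity: "i < N \<Longrightarrow> continuous_on {0..} (v i)"
  using velocity_derivative
  by (auto simp: continuous_on_eq_continuous_within intro: has_vector_derivative_continuous)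

lemma continuous_on_temperature: "i < N \<Longrightarrow> continuous_on {0..} (\<theta> i)"
  using temperature_derivative
  by (auto simp: continuous_on_eq_continuous_within intro: DERIV_continuous)

definition "projection0 = Min ((\<lambda>i. e \<bullet> v i 0) ` {..<N})"
definition "speed0 = Max ((\<lambda>i. norm (v i 0)) ` {..<N})"
definition "temperature0 = Min ((\<lambda>i. \<theta> i 0) ` {..<N})"
definition "aperture0 = projection0 / (2 * speed0)"
definition "speed_cap = (temperature0 / 4) powr (1 / p)"
definition "speed_bound = min (projection0 / 2) (aperture0 / 2 * speed_cap)"

lemma initial_bounds:
  assumes "i < N"
  shows "projection0 \<le> e \<bullet> v i 0" "norm (v i 0) \<le> speed0" "temperature0 \<le> \<theta> i 0"
  using assms unfolding projection0_def speed0_def temperature0_def by (auto intro: Min_le Max_ge)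

lemma inner_e_le_norm: "e \<bullet> y \<le> norm y"
  using norm_cauchy_schwarz[of e y] e_unit by simp

lemma constants_pos:
  "projection0 > 0" "speed0 > 0" "temperature0 > 0" "aperture0 > 0" "speed_bound > 0"
proof -
  have agents_ne: "{..<N} \<noteq> {}" using agents by (simp add: lessThan_empty_iff)
  show proj: "projection0 > 0" "temperature0 > 0"
    unfolding projection0_def temperature0_def
    using agents_ne e_init temperature_init_pos by (auto simp: Min_gr_iff)
  have "0 < e \<bullet> v 0 0" using e_init agents by auto
  also have "\<dots> \<le> speed0" using inner_e_le_norm initial_bounds(2) agents order_trans by fastforce
  finally show "speed0 > 0" .
  then show "aperture0 > 0" using proj by (simp add: aperture0_def)
  then show "speed_bound > 0"
    using proj by (simp add: speed_bound_def speed_cap_def)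
qed

lemma speed_cap_powr: "speed_cap powr p = temperature0 / 4"
  using constants_pos p_pos by (simp add: speed_cap_def powr_powr)

fun barrier :: "barrier_kind \<times> nat \<Rightarrow> real \<Rightarrow> real" where
  "barrier (Projection, i) = (\<lambda>t. e \<bullet> v i t - speed_bound)"
| "barrier (Cone, i) = (\<lambda>t. e \<bullet> v i t - half_decay aperture0 t * norm (v i t))"
| "barrier (Temperature, i) = (\<lambda>t. \<theta> i t - half_decay (temperature0 / 2) t)"

lemma continuous_on_barrier: "i < N \<Longrightarrow> continuous_on {0..} (barrier (k, i))"
  using continuous_on_velocity continuous_on_temperature
  by (cases k) (auto intro!: continuous_intros continuous_on_half_decay)

lemma barrier_initially_pos:
  assumes "i < N"
  shows "barrier (k, i) 0 > 0"
proof (cases k)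
  case Projection
  then show ?thesis
    using initial_bounds(1)[OF assms] constants_pos by (simp add: speed_bound_def)
next
  case Cone
  have "aperture0 * norm (v i 0) \<le> aperture0 * speed0"
    using initial_bounds(2)[OF assms] constants_pos by simp
  also have "\<dots> = projection0 / 2" using constants_pos by (simp add: aperture0_def)
  finally show ?thesis using Cone initial_bounds(1)[OF assms] constants_pos by simp
next
  case Temperature
  then show ?thesis using initial_bounds(3)[OF assms] constants_pos by simp
qed

lemma projection_barrier_increasing:
  assumes "t \<ge> 0" "i < N" "e \<bullet> v i t = speed_bound"
    and "\<And>j. j < N \<Longrightarrow> speed_bound \<le> e \<bullet> v j t"
    and "half_decay aperture0 t * norm (v i t) \<le> e \<bullet> v i t"
    and "half_decay (temperature0 / 2) t \<le> \<theta> i t"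
  shows "\<exists>D>0. (barrier (Projection, i) has_real_derivative D) (at t within {0..})"
proof -
  have "aperture0 / 2 * norm (v i t) \<le> half_decay aperture0 t * norm (v i t)"
    using half_decay_gt[of aperture0 t] constants_pos by (intro mult_right_mono) auto
  also have "\<dots> \<le> aperture0 / 2 * speed_cap"
    using assms(3,5) by (simp add: speed_bound_def)
  finally have "norm (v i t) powr p \<le> speed_cap powr p"
    using constants_pos p_pos by (intro powr_mono2) auto
  also have "\<dots> < half_decay (temperature0 / 2) t"
    using speed_cap_powr half_decay_gt[of "temperature0 / 2" t] constants_pos by simp
  finally have "propulsion i t > 0"
    using assms(6) sigma_pos by (simp add: propulsion_def)
  moreover have "e \<bullet> alignment i t \<ge> 0"
    unfolding alignment_def using assms(3,4) weight_nonneg by (intro alignment_inner_nonneg) auto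
  ultimately have "e \<bullet> (alignment i t + propulsion i t *\<^sub>R v i t) > 0"
    using assms(3) constants_pos by (simp add: inner_add_right add_nonneg_pos)
  moreover have "(barrier (Projection, i) has_real_derivative
      e \<bullet> (alignment i t + propulsion i t *\<^sub>R v i t) - 0) (at t within {0..})"
    unfolding barrier.simps
    by (intro DERIV_diff has_real_derivative_inner_const velocity_derivative assms DERIV_const)
  ultimately show ?thesis by auto
qed

lemma cone_barrier_increasing:
  assumes "t \<ge> 0" "i < N" "v i t \<noteq> 0" "e \<bullet> v i t = half_decay aperture0 t * norm (v i t)"
    and "\<And>j. j < N \<Longrightarrow> half_decay aperture0 t * norm (v j t) \<le> e \<bullet> v j t"
  shows "\<exists>D>0. (barrier (Cone, i) has_real_derivative D) (at t within {0..})"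
proof -
  define a where "a = half_decay aperture0 t"
  define V where "V = alignment i t + propulsion i t *\<^sub>R v i t"
  have nv: "norm (v i t) > 0" using assms(3) by simp
  have vv: "v i t \<bullet> v i t = norm (v i t) * norm (v i t)"
    by (simp add: power2_eq_square flip: power2_norm_eq_inner)
  have a_pos: "a > 0"
    using half_decay_gt[of aperture0 t] constants_pos by (simp add: a_def)
  have der: "(barrier (Cone, i) has_real_derivative e \<bullet> V
      - (a * (v i t \<bullet> V / norm (v i t)) + - (aperture0 * exp (- t)) / 2 * norm (v i t)))
      (at t within {0..})"
    unfolding barrier.simps a_def V_def
    by (intro DERIV_diff DERIV_mult' has_real_derivative_inner_const has_real_derivative_norm
        has_real_derivative_half_decay velocity_derivative assms)
  \<comment> \<open>the radial propulsion term drops out on the cone boundary\<close>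
  have "e \<bullet> V - (a * (v i t \<bullet> V / norm (v i t)) + - (aperture0 * exp (- t)) / 2 * norm (v i t))
      = (e \<bullet> alignment i t - a * (v i t \<bullet> alignment i t) / norm (v i t))
        + aperture0 * exp (- t) / 2 * norm (v i t)"
    using assms(4) nv vv unfolding V_def a_def[symmetric] by (simp add: inner_add_right field_simps)
  also have "\<dots> > 0"
  proof -
    have "e \<bullet> alignment i t - a * (v i t \<bullet> alignment i t) / norm (v i t) \<ge> 0"
      unfolding alignment_def using assms(3-5) a_pos weight_nonneg
      by (intro alignment_cone_nonneg) (auto simp: a_def less_imp_le)
    moreover have "aperture0 * exp (- t) / 2 * norm (v i t) > 0" using constants_pos nv by simp
    ultimately show ?thesis by simp
  qed
  finally show ?thesis using der by blast
qed

lemma temperature_barrier_increasing: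
  assumes "t \<ge> 0" "i < N" "\<theta> i t = half_decay (temperature0 / 2) t"
    and "\<And>j. j < N \<Longrightarrow> half_decay (temperature0 / 2) t \<le> \<theta> j t"
  shows "\<exists>D>0. (barrier (Temperature, i) has_real_derivative D) (at t within {0..})"
proof -
  have "(\<Sum>j<N. m j * \<phi> (norm (x i t - x j t)) * (\<theta> j t - \<theta> i t)) \<ge> 0"
    using assms(3,4) weight_nonneg by (intro sum_nonneg) simp
  then have "\<kappa> * (\<Sum>j<N. m j * \<phi> (norm (x i t - x j t)) * (\<theta> j t - \<theta> i t))
      - - (temperature0 / 2 * exp (- t)) / 2 > 0"
    using kappa_nonneg constants_pos by (simp add: add_nonneg_pos)
  moreover have "(barrier (Temperature, i) has_real_derivative
      \<kappa> * (\<Sum>j<N. m j * \<phi> (norm (x i t - x j t)) * (\<theta> j t - \<theta> i t))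
      - - (temperature0 / 2 * exp (- t)) / 2) (at t within {0..})"
    unfolding barrier.simps
    by (intro DERIV_diff has_real_derivative_half_decay temperature_derivative assms)
  ultimately show ?thesis by blast
qed

lemma barrier_pos:
  assumes "i < N" "t \<ge> 0"
  shows "barrier (k, i) t > 0"
proof (rule finite_family_stays_positive[where F = barrier and I = "UNIV \<times> {..<N}"])
  have "(UNIV :: barrier_kind set) = {Projection, Cone, Temperature}"
    using barrier_kind.exhaust by auto
  then show "finite (UNIV \<times> {..<N} :: (barrier_kind \<times> nat) set)"
    by (metis finite.emptyI finite.insertI finite_SigmaI finite_lessThan)
next
  fix t q
  assume t: "t > 0" and q: "q \<in> UNIV \<times> {..<N}"
    and nonneg: "\<forall>q\<in>UNIV \<times> {..<N}. barrier q t \<ge> 0" and zero: "barrier q t = 0"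
  obtain k i where ki: "q = (k, i)" "i < N" using q by auto
  have proj: "\<And>j. j < N \<Longrightarrow> speed_bound \<le> e \<bullet> v j t"
    and cone: "\<And>j. j < N \<Longrightarrow> half_decay aperture0 t * norm (v j t) \<le> e \<bullet> v j t"
    and temp: "\<And>j. j < N \<Longrightarrow> half_decay (temperature0 / 2) t \<le> \<theta> j t"
    using nonneg by (fastforce dest: bspec[of _ _ "(Projection, _)"] bspec[of _ _ "(Cone, _)"]
        bspec[of _ _ "(Temperature, _)"])+
  have "v i t \<noteq> 0" using proj[OF ki(2)] constants_pos by auto
  show "\<exists>D>0. (barrier q has_real_derivative D) (at t within {0..})"
  proof (cases k)
    case Projection
    show ?thesis unfolding ki(1) Projection
      by (rule projection_barrier_increasing)
        (use zero t ki proj cone[OF ki(2)] temp[OF ki(2)] Projection in auto)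
  next
    case Cone
    show ?thesis unfolding ki(1) Cone
      by (rule cone_barrier_increasing) (use zero t ki proj cone Cone \<open>v i t \<noteq> 0\<close> in auto)
  next
    case Temperature
    show ?thesis unfolding ki(1) Temperature
      by (rule temperature_barrier_increasing) (use zero t ki temp Temperature in auto)
  qed
qed (use assms continuous_on_barrier barrier_initially_pos in auto)

lemma speed_lower_bound: "i < N \<Longrightarrow> t \<ge> 0 \<Longrightarrow> speed_bound \<le> norm (v i t)"
  using barrier_pos[of i t Projection] inner_e_le_norm[of "v i t"] by simp

end

theorem lemma2p2:
  fixes N :: nat and m :: "nat \<Rightarrow> real" and \<sigma> p \<kappa> :: real
    and \<phi> :: "real \<Rightarrow> real"
    and x v :: "nat \<Rightarrow> real \<Rightarrow> 'a::euclidean_space" and \<theta> :: "nat \<Rightarrow> real \<Rightarrow> real"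
  assumes "N \<ge> 1"
    and "\<forall>i<N. m i > 0"
    and "\<sigma> > 0" and "p > 0" and "\<kappa> \<ge> 0"
    and "comm_kernel \<phi>"
    and "\<forall>i<N. \<theta> i 0 > 0"
    and "CSF_solution N m \<sigma> p \<kappa> \<phi> x v \<theta>"
    and "sectorial N v"
  shows "\<exists>c0>0. \<forall>t\<ge>0. Min ((\<lambda>i. norm (v i t)) ` {..<N}) \<ge> c0"
proof -
  obtain e :: 'a where "norm e = 1" "\<forall>i<N. e \<bullet> v i 0 > 0"
    using \<open>sectorial N v\<close> unfolding sectorial_def by blast
  then interpret sectorial_CSF N m \<sigma> p \<kappa> \<phi> x v \<theta> e
    using assms by unfold_locales (auto simp: comm_kernel_def)
  have "Min ((\<lambda>i. norm (v i t)) ` {..<N}) \<ge> speed_bound" if "t \<ge> 0" for t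
    using agents speed_lower_bound[OF _ that] by (auto simp: lessThan_empty_iff)
  then show ?thesis using constants_pos(5) by blast
qed

end
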